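(* For every $n\ge2$, within the space of real CPS tensors in $\mathbb{R}^{n\times n\times n\times n}$, one has the strict inclusions \[ \vec S^{n^2\times n^2}_+\subsetneq PSD^{4,n}_+\subsetneq \mathbb{R}CPS^{n^4}_+ . \] Moreover, already among real symmetric tensors, $\vec S^{n^2\times n^2}_+$ is a proper subset of $\mathbb{R}CPS^{n^4}_+$.
   Context: A real tensor $\mathcal{A}\in\mathbb{R}^{n\times n\times n\times n}$ is (real) CPS if $\mathcal{A}_{ijkl}=\mathcal{A}_{klij}=\mathcal{A}_{jikl}=\mathcal{A}_{ijlk}$ for all indices; symmetric if invariant under all index permutations. For a real CPS $\mathcal{A}$: $\mathcal{A}\in\mathbb{R}CPS^{n^4}_+$ iff $\sum_{ijkl}\mathcal{A}_{ijkl}x_ix_jx_kx_l\ge0$ for all $x\in\mathbb{R}^n$; $\mathcal{A}\in\vec S^{n^2\times n^2}_+$ (matrix PSD) iff $\sum_{ijkl}\mathcal{A}_{ijkl}X_{ij}X_{kl}\ge0$ for all real symmetric $X\in\mathbb{R}^{n\times n}$; $\mathcal{A}\in PSD^{4,n}_+$ (general PSD) iff $\sum_{ijkl}\mathcal{A}_{ijkl}X_{ij}X_{kl}\ge0$ for all real symmetric positive semidefinite $X\in\mathbb{R}^{n\times n}$. *)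

theory Defs
  imports "HOL-Analysis.Analysis" "HOL-Combinatorics.Permutations"
begin

text \<open>Real fourth-order tensors over an index type 'n (with CARD('n) = n).\<close>
type_synonym 'n tensor4 = "'n \<Rightarrow> 'n \<Rightarrow> 'n \<Rightarrow> 'n \<Rightarrow> real"

definition is_CPS :: "('n::finite) tensor4 \<Rightarrow> bool" where
  "is_CPS A \<longleftrightarrow> (\<forall>i j k l. A i j k l = A k l i j \<and> A i j k l = A j i k l \<and> A i j k l = A i j l k)"

definition is_sym_tensor :: "('n::finite) tensor4 \<Rightarrow> bool" where
  "is_sym_tensor A \<longleftrightarrow> (\<forall>(f::nat \<Rightarrow> 'n) \<sigma>. \<sigma> permutes {0..<4} \<longrightarrow>
      A (f (\<sigma> 0)) (f (\<sigma> 1)) (f (\<sigma> 2)) (f (\<sigma> 3)) = A (f 0) (f 1) (f 2) (f 3))"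

definition sym_mat :: "('n::finite \<Rightarrow> 'n \<Rightarrow> real) \<Rightarrow> bool" where
  "sym_mat X \<longleftrightarrow> (\<forall>i j. X i j = X j i)"

definition psd_mat :: "('n::finite \<Rightarrow> 'n \<Rightarrow> real) \<Rightarrow> bool" where
  "psd_mat X \<longleftrightarrow> sym_mat X \<and> (\<forall>v. (\<Sum>i\<in>UNIV. \<Sum>j\<in>UNIV. X i j * v i * v j) \<ge> 0)"

definition tensor_form :: "('n::finite) tensor4 \<Rightarrow> ('n \<Rightarrow> real) \<Rightarrow> real" where
  "tensor_form A x = (\<Sum>i\<in>UNIV. \<Sum>j\<in>UNIV. \<Sum>k\<in>UNIV. \<Sum>l\<in>UNIV. A i j k l * x i * x j * x k * x l)"

definition bilin_form :: "('n::finite) tensor4 \<Rightarrow> ('n \<Rightarrow> 'n \<Rightarrow> real) \<Rightarrow> real" where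
  "bilin_form A X = (\<Sum>i\<in>UNIV. \<Sum>j\<in>UNIV. \<Sum>k\<in>UNIV. \<Sum>l\<in>UNIV. A i j k l * X i j * X k l)"

definition RCPS_plus :: "('n::finite) tensor4 set" where
  "RCPS_plus = {A. is_CPS A \<and> (\<forall>x. tensor_form A x \<ge> 0)}"

text \<open>vec S^{n^2 x n^2}_+ : CPS tensors that are PSD as n^2 x n^2 matrices (on symmetric X).\<close>
definition MatPSD_plus :: "('n::finite) tensor4 set" where
  "MatPSD_plus = {A. is_CPS A \<and> (\<forall>X. sym_mat X \<longrightarrow> bilin_form A X \<ge> 0)}"

definition GenPSD_plus :: "('n::finite) tensor4 set" where
  "GenPSD_plus = {A. is_CPS A \<and> (\<forall>X. psd_mat X \<longrightarrow> bilin_form A X \<ge> 0)}"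

end

theory Submission
  imports Defs "HOL-Library.Function_Algebras"
begin

text \<open>
  Rank-one matrices \<open>x x\<^sup>T\<close> are symmetric PSD, and the quartic form of \<open>A\<close> at \<open>x\<close> is
  the bilinear form of \<open>A\<close> at \<open>x x\<^sup>T\<close>; this gives the two inclusions. Both are strict,
  already on two coordinates \<open>a \<noteq> b\<close>. The full symmetrization \<open>T\<close> (\<open>sym_aabb a b\<close>)
  of \<open>e\<^sub>a \<otimes> e\<^sub>a \<otimes> e\<^sub>b \<otimes> e\<^sub>b\<close> satisfies \<open>\<langle>X, T X\<rangle> = 2 X\<^sub>a\<^sub>a X\<^sub>b\<^sub>b + 4 X\<^sub>a\<^sub>b\<^sup>2\<close>,
  which is nonnegative on PSD matrices but equals \<open>-2\<close> at \<open>diag(1,-1)\<close>; \<open>T\<close> is a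
  symmetric tensor. The CPS tensor \<open>C\<close> (\<open>null_aabb a b\<close>) with
  \<open>\<langle>X, C X\<rangle> = 4 (X\<^sub>a\<^sub>b\<^sup>2 - X\<^sub>a\<^sub>a X\<^sub>b\<^sub>b)\<close> has identically vanishing quartic form but
  takes the value \<open>-4\<close> at the PSD matrix \<open>diag(1,1)\<close>.
\<close>

definition unit_tensor :: "'n \<Rightarrow> 'n \<Rightarrow> 'n \<Rightarrow> 'n \<Rightarrow> ('n::finite) tensor4" where
  "unit_tensor p q r s = (\<lambda>i j k l. of_bool (i = p \<and> j = q \<and> k = r \<and> l = s))"

definition outer_mat :: "('n::finite \<Rightarrow> real) \<Rightarrow> 'n \<Rightarrow> 'n \<Rightarrow> real" where
  "outer_mat x = (\<lambda>i j. x i * x j)"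

definition unit_vec :: "'n::finite \<Rightarrow> 'n \<Rightarrow> real" where
  "unit_vec a = (\<lambda>i. of_bool (i = a))"

lemma bilin_form_add: "bilin_form (A + B) X = bilin_form A X + bilin_form B X"
  unfolding bilin_form_def by (simp add: algebra_simps sum.distrib)

lemma bilin_form_diff: "bilin_form (A - B) X = bilin_form A X - bilin_form B X"
  unfolding bilin_form_def by (simp add: algebra_simps sum_subtractf)

lemma bilin_form_numeral_mult: "bilin_form (numeral m * A) X = numeral m * bilin_form A X"
  unfolding bilin_form_def by (simp add: algebra_simps sum_distrib_left)

lemma bilin_form_unit_tensor: "bilin_form (unit_tensor p q r s) X = X p q * X r s"
  unfolding bilin_form_def unit_tensor_def
  by (simp add: of_bool_conj mult.assoc sum_distrib_left[symmetric])

lemma tensor_form_eq_bilin_form_outer: "tensor_form A x = bilin_form A (outer_mat x)"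
  unfolding tensor_form_def bilin_form_def outer_mat_def by (simp add: ac_simps)

lemma psd_mat_outer_mat: "psd_mat (outer_mat x)"
proof -
  have "(\<Sum>i\<in>UNIV. \<Sum>j\<in>UNIV. x i * x j * v i * v j) = (\<Sum>i\<in>UNIV. x i * v i)\<^sup>2" for v
    by (simp add: power2_eq_square sum_product ac_simps)
  then show ?thesis
    unfolding psd_mat_def sym_mat_def outer_mat_def by (simp add: mult.commute)
qed

lemma sym_mat_outer_mat: "sym_mat (outer_mat x)"
  using psd_mat_outer_mat psd_mat_def by blast

lemma psd_mat_add: "psd_mat X \<Longrightarrow> psd_mat Y \<Longrightarrow> psd_mat (X + Y)"
  unfolding psd_mat_def sym_mat_def by (simp add: algebra_simps sum.distrib)

lemma psd_mat_diag_nonneg: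
  assumes "psd_mat X"
  shows "X a a \<ge> 0"
proof -
  have "(\<Sum>i\<in>UNIV. \<Sum>j\<in>UNIV. X i j * unit_vec a i * unit_vec a j) \<ge> 0"
    using assms unfolding psd_mat_def by blast
  then show ?thesis
    by (simp add: unit_vec_def mult.commute[of "X _ _"] mult.assoc sum_distrib_left[symmetric])
qed

lemma MatPSD_plus_subset_GenPSD_plus: "MatPSD_plus \<subseteq> GenPSD_plus"
  unfolding MatPSD_plus_def GenPSD_plus_def psd_mat_def by auto

lemma GenPSD_plus_subset_RCPS_plus: "GenPSD_plus \<subseteq> RCPS_plus"
  unfolding GenPSD_plus_def RCPS_plus_def
  using psd_mat_outer_mat by (auto simp: tensor_form_eq_bilin_form_outer)

lemma is_sym_tensor_mset: "is_sym_tensor (\<lambda>i j k l. g (mset [i, j, k, l]))"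
  unfolding is_sym_tensor_def
proof (intro allI impI)
  fix f :: "nat \<Rightarrow> 'a" and \<sigma> :: "nat \<Rightarrow> nat"
  assume \<sigma>: "\<sigma> permutes {0..<4}"
  then have "mset (permute_list \<sigma> (map f [0..<4])) = mset (map f [0..<4])"
    by (intro mset_permute_list) (simp add: lessThan_atLeast0)
  moreover have "permute_list \<sigma> (map f [0..<4]) = map (f \<circ> \<sigma>) [0..<4]"
    using permutes_in_image[OF \<sigma>] by (simp add: permute_list_def)
  ultimately show "g (mset [f (\<sigma> 0), f (\<sigma> 1), f (\<sigma> 2), f (\<sigma> 3)]) = g (mset [f 0, f 1, f 2, f 3])"
    by (simp add: upt_rec numeral_2_eq_2 numeral_3_eq_3)
qed

lemma is_CPS_mset: "is_CPS (\<lambda>i j k l. g (mset [i, j, k, l]))"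
  unfolding is_CPS_def by (simp add: add_mset_commute)

definition sym_aabb :: "'n \<Rightarrow> 'n \<Rightarrow> ('n::finite) tensor4" where
  "sym_aabb a b = unit_tensor a a b b + unit_tensor a b a b + unit_tensor a b b a
     + unit_tensor b a a b + unit_tensor b a b a + unit_tensor b b a a"

definition null_aabb :: "'n \<Rightarrow> 'n \<Rightarrow> ('n::finite) tensor4" where
  "null_aabb a b = sym_aabb a b - 3 * (unit_tensor a a b b + unit_tensor b b a a)"

lemma sym_aabb_eq_count:
  assumes "a \<noteq> b"
  shows "sym_aabb a b = (\<lambda>i j k l. of_bool (count (mset [i, j, k, l]) a = 2
                                              \<and> count (mset [i, j, k, l]) b = 2))"
  using assms unfolding sym_aabb_def unit_tensor_def by (intro ext) auto

lemma is_sym_tensor_sym_aabb: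
  assumes "a \<noteq> b"
  shows "is_sym_tensor (sym_aabb a b)"
  unfolding sym_aabb_eq_count[OF assms] by (rule is_sym_tensor_mset)

lemma is_CPS_sym_aabb:
  assumes "a \<noteq> b"
  shows "is_CPS (sym_aabb a b)"
  unfolding sym_aabb_eq_count[OF assms] by (rule is_CPS_mset)

lemma is_CPS_null_aabb: "is_CPS (null_aabb a b)"
  unfolding is_CPS_def null_aabb_def sym_aabb_def unit_tensor_def by (simp add: ac_simps)

lemma bilin_form_sym_aabb:
  assumes "sym_mat X"
  shows "bilin_form (sym_aabb a b) X = 2 * X a a * X b b + 4 * (X a b)\<^sup>2"
  using assms unfolding sym_aabb_def sym_mat_def
  by (simp add: bilin_form_add bilin_form_unit_tensor power2_eq_square)

lemma bilin_form_null_aabb: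
  assumes "sym_mat X"
  shows "bilin_form (null_aabb a b) X = 4 * ((X a b)\<^sup>2 - X a a * X b b)"
  using assms unfolding null_aabb_def
  by (simp add: bilin_form_diff bilin_form_numeral_mult bilin_form_add bilin_form_unit_tensor
      bilin_form_sym_aabb sym_mat_def algebra_simps)

lemma sym_aabb_in_GenPSD_plus: "a \<noteq> b \<Longrightarrow> sym_aabb a b \<in> GenPSD_plus"
  unfolding GenPSD_plus_def
  by (auto simp: is_CPS_sym_aabb psd_mat_def bilin_form_sym_aabb psd_mat_diag_nonneg)

lemma sym_aabb_notin_MatPSD_plus:
  assumes "a \<noteq> b"
  shows "sym_aabb a b \<notin> MatPSD_plus"
proof -
  let ?X = "outer_mat (unit_vec a) - outer_mat (unit_vec b)"
  have "sym_mat ?X"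
    unfolding sym_mat_def outer_mat_def by (simp add: mult.commute)
  moreover have "bilin_form (sym_aabb a b) ?X = -2"
    using assms \<open>sym_mat ?X\<close> by (simp add: bilin_form_sym_aabb outer_mat_def unit_vec_def)
  ultimately show ?thesis
    unfolding MatPSD_plus_def by force
qed

lemma null_aabb_in_RCPS_plus: "null_aabb a b \<in> RCPS_plus"
  unfolding RCPS_plus_def
  by (simp add: is_CPS_null_aabb tensor_form_eq_bilin_form_outer bilin_form_null_aabb
      sym_mat_outer_mat) (simp add: outer_mat_def power2_eq_square)

lemma null_aabb_notin_GenPSD_plus:
  assumes "a \<noteq> b"
  shows "null_aabb a b \<notin> GenPSD_plus"
proof -
  let ?Y = "outer_mat (unit_vec a) + outer_mat (unit_vec b)"
  have "psd_mat ?Y"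
    by (intro psd_mat_add psd_mat_outer_mat)
  moreover have "bilin_form (null_aabb a b) ?Y = -4"
    using assms \<open>psd_mat ?Y\<close> by (simp add: psd_mat_def bilin_form_null_aabb outer_mat_def unit_vec_def)
  ultimately show ?thesis
    unfolding GenPSD_plus_def by force
qed

theorem mainTheorem19:
  assumes "CARD('n::finite) \<ge> 2"
  shows "(MatPSD_plus :: 'n tensor4 set) \<subset> GenPSD_plus
       \<and> (GenPSD_plus :: 'n tensor4 set) \<subset> RCPS_plus
       \<and> (MatPSD_plus \<inter> {A :: 'n tensor4. is_sym_tensor A}) \<subset> (RCPS_plus \<inter> {A. is_sym_tensor A})"
proof -
  obtain a b :: 'n where ab: "a \<noteq> b"
  proof -
    have "\<not> card (UNIV :: 'n set) \<le> Suc 0"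
      using assms by simp
    then show ?thesis
      using that by (auto simp: card_le_Suc0_iff_eq)
  qed
  have "(MatPSD_plus :: 'n tensor4 set) \<subset> GenPSD_plus"
    using MatPSD_plus_subset_GenPSD_plus sym_aabb_in_GenPSD_plus[OF ab]
      sym_aabb_notin_MatPSD_plus[OF ab] by blast
  moreover have "(GenPSD_plus :: 'n tensor4 set) \<subset> RCPS_plus"
    using GenPSD_plus_subset_RCPS_plus null_aabb_in_RCPS_plus
      null_aabb_notin_GenPSD_plus[OF ab] by blast
  moreover have "sym_aabb a b \<in> RCPS_plus \<inter> {A. is_sym_tensor A} - MatPSD_plus"
    using GenPSD_plus_subset_RCPS_plus sym_aabb_in_GenPSD_plus[OF ab]
      sym_aabb_notin_MatPSD_plus[OF ab] is_sym_tensor_sym_aabb[OF ab] by blast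
  ultimately show ?thesis
    by blast
qed

end
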